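(* Let $g\in\mathcal{H}(\mathbb{D})$. (a) If $g(0)=0$ and $L=P(g)\delta_0\in\mathscr{A}_g$ for some polynomial $P$, then $L=0$. (b) A $g$-operator $L$ is trivial if and only if $L(z^\ell)=0$ for every $\ell\in\mathbb{N}$.
   Context: $\mathcal{H}(\mathbb{D})$ is the space of analytic functions on the unit disc. For $g\in\mathcal{H}(\mathbb{D})$, operators on $\mathcal{H}(\mathbb{D})$: $M_gf=fg$, $T_gf(z)=\int_0^zf(\zeta)g'(\zeta)\,d\zeta$, $S_gf(z)=\int_0^zf'(\zeta)g(\zeta)\,d\zeta$, $\delta_0f=f(0)$; $h\,\delta_0$ denotes $f\mapsto f(0)h$. $\mathscr{A}_g$ is the algebra generated by $M_g,S_g,T_g$ (linear span of finite compositions of these, at least one factor); its elements are called $g$-operators. A $g$-operator $L$ is trivial if $L=g(0)P(g-g(0))\delta_0$ for some polynomial $P$. $\mathbb{N}$ is the positive integers. *)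

theory Defs
  imports "HOL-Complex_Analysis.Complex_Analysis" "HOL-Computational_Algebra.Polynomial"
begin

type_synonym op = "(complex \<Rightarrow> complex) \<Rightarrow> (complex \<Rightarrow> complex)"

text \<open>Elements of H(D): functions holomorphic on the open unit disc
(values outside the disc are irrelevant).\<close>
definition HD :: "(complex \<Rightarrow> complex) set" where
  "HD = {f. f holomorphic_on ball 0 1}"

definition op_eq :: "op \<Rightarrow> op \<Rightarrow> bool" where
  "op_eq L L' \<longleftrightarrow> (\<forall>f\<in>HD. \<forall>z\<in>ball 0 1. L f z = L' f z)"

definition Mop :: "(complex \<Rightarrow> complex) \<Rightarrow> op" where
  "Mop g f = (\<lambda>z. f z * g z)"

definition Top :: "(complex \<Rightarrow> complex) \<Rightarrow> op" where
  "Top g f = (\<lambda>z. contour_integral (linepath 0 z) (\<lambda>\<zeta>. f \<zeta> * deriv g \<zeta>))"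

definition Sop :: "(complex \<Rightarrow> complex) \<Rightarrow> op" where
  "Sop g f = (\<lambda>z. contour_integral (linepath 0 z) (\<lambda>\<zeta>. deriv f \<zeta> * g \<zeta>))"

text \<open>The algebra generated by M_g, S_g, T_g: closed under composition and
linear combinations (= linear span of finite compositions, at least one factor).\<close>
inductive_set gops :: "(complex \<Rightarrow> complex) \<Rightarrow> op set" for g where
  gM: "Mop g \<in> gops g"
| gS: "Sop g \<in> gops g"
| gT: "Top g \<in> gops g"
| gcomp: "L1 \<in> gops g \<Longrightarrow> L2 \<in> gops g \<Longrightarrow> (L1 \<circ> L2) \<in> gops g"
| gadd: "L1 \<in> gops g \<Longrightarrow> L2 \<in> gops g \<Longrightarrow> (\<lambda>f z. L1 f z + L2 f z) \<in> gops g"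
| gscale: "L \<in> gops g \<Longrightarrow> (\<lambda>f z. c * L f z) \<in> gops g"

definition trivial_gop :: "(complex \<Rightarrow> complex) \<Rightarrow> op \<Rightarrow> bool" where
  "trivial_gop g L \<longleftrightarrow>
     (\<exists>P :: complex poly. op_eq L (\<lambda>f z. g 0 * poly P (g z - g 0) * f 0))"

end

theory Submission
  imports Defs
begin

text \<open>
  Every \<open>g\<close>-operator is linear and continuous for locally uniform convergence on the disc,
  since \<open>M\<^sub>g\<close>, \<open>T\<^sub>g\<close> and \<open>S\<^sub>g\<close> are built from multiplication, differentiation and
  integration along radii. So if \<open>L\<close> kills all \<open>z\<^sup>l\<close>, \<open>l \<ge> 1\<close>, applying \<open>L\<close> to the
  Taylor polynomials of \<open>f\<close> gives \<open>L f = f(0) L 1\<close>; and \<open>L 1\<close> is a polynomial in \<open>g\<close>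
  because \<open>g\<close>-operators map powers of \<open>g\<close> to polynomials in \<open>g\<close>.

  If \<open>g(0) = 0\<close>, every \<open>g\<close>-operator maps \<open>g\<^sup>n\<close> to \<open>Q\<^sub>n(g) g\<^sup>n\<close>, where the
  coefficients of \<open>Q\<^sub>n\<close> are rational functions of \<open>n\<close>. If moreover \<open>L = P(g) \<delta>\<^sub>0\<close>,
  then \<open>L g\<^sup>n = 0\<close> for \<open>n \<ge> 1\<close>, so \<open>Q\<^sub>n = 0\<close> for \<open>n \<ge> 1\<close> because a nonconstant \<open>g\<close>
  takes infinitely many values (open mapping theorem; for \<open>g = 0\<close> every \<open>g\<close>-operator
  vanishes). A rational function vanishing at all positive integers vanishes identically,
  hence \<open>Q\<^sub>0 = 0\<close> and \<open>P(g) = L 1 = 0\<close>.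
\<close>

lemma path_image_linepath_0_subset_disc:
  "z \<in> ball (0::complex) 1 \<Longrightarrow> path_image (linepath 0 z) \<subseteq> ball 0 1"
  by (simp add: closed_segment_subset)

lemma contour_integrable_linepath_0:
  "h holomorphic_on ball 0 1 \<Longrightarrow> z \<in> ball 0 1 \<Longrightarrow> h contour_integrable_on linepath 0 z"
  by (meson contour_integrable_holomorphic_simple open_ball valid_path_linepath
        path_image_linepath_0_subset_disc)

lemma contour_integral_linepath_0_primitive:
  assumes "\<And>x. x \<in> ball 0 1 \<Longrightarrow> (G has_field_derivative h x) (at x)" and "z \<in> ball 0 1"
  shows "contour_integral (linepath 0 z) h = G z - G 0"
proof -
  have "(h has_contour_integral G z - G 0) (linepath 0 z)"
    using contour_integral_primitive[of "ball 0 1" G h "linepath 0 z"] assms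
      path_image_linepath_0_subset_disc[OF assms(2)]
    by (simp add: has_field_derivative_at_within)
  then show ?thesis by (rule contour_integral_unique)
qed

definition line_integral_op :: op where
  "line_integral_op f = (\<lambda>z. contour_integral (linepath 0 z) f)"

lemma line_integral_op_has_field_derivative:
  assumes h: "h holomorphic_on ball 0 1" and x: "x \<in> ball 0 1"
  shows "(line_integral_op h has_field_derivative h x) (at x)"
proof -
  obtain G where "\<And>x. x \<in> ball 0 1 \<Longrightarrow> (G has_field_derivative h x) (at x within ball 0 1)"
    using holomorphic_convex_primitive'[OF convex_ball open_ball h] by blast
  then have G: "\<And>x. x \<in> ball 0 1 \<Longrightarrow> (G has_field_derivative h x) (at x)"
    by (metis at_within_open open_ball)
  have "((\<lambda>z. G z - G 0) has_field_derivative h x) (at x)"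
    using DERIV_diff[OF G[OF x] DERIV_const] by simp
  then show ?thesis
    by (rule has_field_derivative_transform_within_open[OF _ open_ball x])
       (metis line_integral_op_def contour_integral_linepath_0_primitive[OF G])
qed

lemma holomorphic_on_line_integral_op:
  "h holomorphic_on ball 0 1 \<Longrightarrow> line_integral_op h holomorphic_on ball 0 1"
  using line_integral_op_has_field_derivative holomorphic_on_open[OF open_ball] by blast

lemma Top_altdef: "Top g = line_integral_op \<circ> Mop (deriv g)"
  by (simp add: fun_eq_iff Top_def Mop_def line_integral_op_def)

lemma Sop_altdef: "Sop g = line_integral_op \<circ> Mop g \<circ> deriv"
  by (simp add: fun_eq_iff Sop_def Mop_def line_integral_op_def)

definition locally_uniform_limit :: "(nat \<Rightarrow> complex \<Rightarrow> complex) \<Rightarrow> (complex \<Rightarrow> complex) \<Rightarrow> bool"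
  where "locally_uniform_limit F f \<longleftrightarrow> (\<forall>r<1. uniform_limit (cball 0 r) F f sequentially)"

lemma bounded_image_cball:
  fixes h :: "complex \<Rightarrow> complex"
  assumes "continuous_on (ball 0 1) h" and "r < 1"
  shows "bounded (h ` cball 0 r)"
proof -
  have "cball 0 r \<subseteq> ball (0::complex) 1" using \<open>r < 1\<close> by auto
  then have "continuous_on (cball 0 r) h" using assms(1) by (rule continuous_on_subset[rotated])
  then show ?thesis by (intro compact_imp_bounded compact_continuous_image compact_cball)
qed

lemma locally_uniform_limit_mult:
  assumes "locally_uniform_limit F f"
    and "continuous_on (ball 0 1) f" and "continuous_on (ball 0 1) k"
  shows "locally_uniform_limit (\<lambda>n z. F n z * k z) (\<lambda>z. f z * k z)"
  using assms unfolding locally_uniform_limit_def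
  by (auto intro!: uniform_lim_mult uniform_limit_const bounded_image_cball)

lemma locally_uniform_limit_line_integral_op:
  assumes F: "\<And>n. F n holomorphic_on ball 0 1" and f: "f holomorphic_on ball 0 1"
    and lim: "locally_uniform_limit F f"
  shows "locally_uniform_limit (\<lambda>n. line_integral_op (F n)) (line_integral_op f)"
  unfolding locally_uniform_limit_def
proof (intro allI impI uniform_limitI)
  fix r e :: real assume r: "r < 1" and e: "0 < e"
  have "uniform_limit (cball 0 r) F f sequentially"
    using lim r unfolding locally_uniform_limit_def by blast
  then have "\<forall>\<^sub>F n in sequentially. \<forall>x\<in>cball 0 r. dist (F n x) (f x) < e / 2"
    by (rule uniform_limitD) (use e in simp)
  then show "\<forall>\<^sub>F n in sequentially. \<forall>z\<in>cball 0 r.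
               dist (line_integral_op (F n) z) (line_integral_op f z) < e"
  proof eventually_elim
    case (elim n)
    show ?case
    proof
      fix z :: complex assume z: "z \<in> cball 0 r"
      then have zb: "z \<in> ball 0 1"
        using r by auto
      have "0 \<in> cball 0 r"
        using z norm_ge_zero[of z] by (simp del: norm_ge_zero)
      then have seg: "closed_segment 0 z \<subseteq> cball 0 r"
        using z by (simp add: closed_segment_subset)
      have "dist (line_integral_op (F n) z) (line_integral_op f z)
          = norm (contour_integral (linepath 0 z) (\<lambda>w. F n w - f w))"
        using contour_integral_diff[OF contour_integrable_linepath_0[OF F zb]
                                       contour_integrable_linepath_0[OF f zb]]
        by (simp add: line_integral_op_def dist_norm)
      also have "\<dots> \<le> e / 2 * norm (z - 0)"
        using elim seg e
        by (intro contour_integral_bound_linepath contour_integrable_linepath_0[OF _ zb])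
           (auto intro!: holomorphic_intros F f simp: dist_norm less_imp_le)
      also have "\<dots> < e"
        using zb e by (simp add: mult_left_le)
      finally show "dist (line_integral_op (F n) z) (line_integral_op f z) < e" .
    qed
  qed
qed

lemma locally_uniform_limit_deriv:
  assumes F: "\<And>n. F n holomorphic_on ball 0 1" and f: "f holomorphic_on ball 0 1"
    and lim: "locally_uniform_limit F f"
  shows "locally_uniform_limit (\<lambda>n. deriv (F n)) (deriv f)"
  unfolding locally_uniform_limit_def
proof (intro allI impI uniform_limitI)
  fix r e :: real assume r: "r < 1" and e: "0 < e"
  define d where "d = (1 - max r 0) / 2"
  have d: "0 < d" "max r 0 + d < 1"
    using r by (simp_all add: d_def max_def field_simps)
  have "uniform_limit (cball 0 (max r 0 + d)) F f sequentially"
    using lim d unfolding locally_uniform_limit_def by blast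
  then have "\<forall>\<^sub>F n in sequentially. \<forall>x\<in>cball 0 (max r 0 + d). dist (F n x) (f x) < e * d / 2"
    by (rule uniform_limitD) (use e d in simp)
  then show "\<forall>\<^sub>F n in sequentially. \<forall>\<xi>\<in>cball 0 r. dist (deriv (F n) \<xi>) (deriv f \<xi>) < e"
  proof eventually_elim
    case (elim n)
    show ?case
    proof
      fix \<xi> :: complex assume "\<xi> \<in> cball 0 r"
      then have sub: "cball \<xi> d \<subseteq> cball 0 (max r 0 + d)"
        by (simp add: cball_subset_cball_iff dist_norm le_max_iff_disj)
      moreover have "cball 0 (max r 0 + d) \<subseteq> ball (0::complex) 1"
        using d by auto
      ultimately have sub1: "cball \<xi> d \<subseteq> ball 0 1" by blast
      then have \<xi>: "\<xi> \<in> ball 0 1"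
        using d(1) by (meson centre_in_cball less_imp_le subsetD)
      have hol: "(\<lambda>w. F n w - f w) holomorphic_on cball \<xi> d"
        using sub1 by (intro holomorphic_intros holomorphic_on_subset[OF F] holomorphic_on_subset[OF f])
      have "norm ((deriv ^^ 1) (\<lambda>w. F n w - f w) \<xi>) \<le> fact 1 * (e * d / 2) / d ^ 1"
        using elim sub
        by (intro Cauchy_inequality holomorphic_on_subset[OF hol ball_subset_cball]
              holomorphic_on_imp_continuous_on[OF hol] d(1))
           (auto simp: dist_norm less_imp_le)
      moreover have "deriv (\<lambda>w. F n w - f w) \<xi> = deriv (F n) \<xi> - deriv f \<xi>"
        using \<xi> by (intro deriv_diff holomorphic_on_imp_differentiable_at[OF F open_ball]
                            holomorphic_on_imp_differentiable_at[OF f open_ball])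
      ultimately show "dist (deriv (F n) \<xi>) (deriv f \<xi>) < e"
        using d e by (simp add: dist_norm)
    qed
  qed
qed

lemma norm_Taylor_term_le:
  assumes f: "f holomorphic_on cball 0 R" and R: "0 < R"
    and B: "\<And>x. x \<in> cball 0 R \<Longrightarrow> norm (f x) \<le> B" and w: "norm w \<le> r"
  shows "norm ((deriv ^^ i) f 0 / fact i * w ^ i) \<le> B * (r / R) ^ i"
proof -
  have "0 \<le> B"
    using B[of 0] R by (meson centre_in_cball less_imp_le norm_ge_zero order_trans)
  have "norm ((deriv ^^ i) f 0) \<le> fact i * B / R ^ i"
    using B by (intro Cauchy_inequality holomorphic_on_subset[OF f ball_subset_cball]
                      holomorphic_on_imp_continuous_on[OF f] R) simp
  then have "norm ((deriv ^^ i) f 0) / fact i * norm w ^ i \<le> (fact i * B / R ^ i) / fact i * r ^ i"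
    using w R \<open>0 \<le> B\<close> by (intro mult_mono divide_right_mono power_mono) auto
  then show ?thesis
    by (simp add: norm_mult norm_divide norm_power power_divide)
qed

lemma locally_uniform_limit_Taylor_polynomials:
  assumes f: "f holomorphic_on ball 0 1"
  shows "locally_uniform_limit (\<lambda>N w. \<Sum>i<N. (deriv ^^ i) f 0 / fact i * w ^ i) f"
  unfolding locally_uniform_limit_def
proof (intro allI impI)
  fix r :: real assume r: "r < 1"
  define R where "R = (1 + max r 0) / 2"
  have R: "0 < R" "max r 0 < R" "R < 1"
    using r by (simp_all add: R_def max_def field_simps)
  obtain B where B: "\<And>x. x \<in> cball 0 R \<Longrightarrow> norm (f x) \<le> B"
    using bounded_image_cball[OF holomorphic_on_imp_continuous_on[OF f] R(3)]
    unfolding bounded_iff by blast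
  have "cball 0 R \<subseteq> ball (0::complex) 1"
    using R by auto
  then have fR: "f holomorphic_on cball 0 R"
    by (rule holomorphic_on_subset[OF f])
  define M where "M i = B * (max r 0 / R) ^ i" for i
  have term_bound: "norm ((deriv ^^ i) f 0 / fact i * w ^ i) \<le> M i" if "w \<in> cball 0 r" for i w
    unfolding M_def using that by (intro norm_Taylor_term_le[OF fR R(1) B]) auto
  have "summable M"
    unfolding M_def using R by (intro summable_mult summable_geometric) auto
  then have "uniform_limit (cball 0 r) (\<lambda>N w. \<Sum>i<N. (deriv ^^ i) f 0 / fact i * w ^ i)
               (\<lambda>w. \<Sum>i. (deriv ^^ i) f 0 / fact i * w ^ i) sequentially"
    using term_bound by (intro Weierstrass_m_test) auto
  moreover have "(\<Sum>i. (deriv ^^ i) f 0 / fact i * w ^ i) = f w" if "w \<in> cball 0 r" for w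
    using holomorphic_power_series[OF f, of w] that r by (simp add: sums_iff)
  ultimately show "uniform_limit (cball 0 r) (\<lambda>N w. \<Sum>i<N. (deriv ^^ i) f 0 / fact i * w ^ i) f
                     sequentially"
    by (subst (asm) uniform_limit_cong'[OF refl]) auto
qed

text \<open>Elements of \<^const>\<open>HD\<close> are only determined on the disc, so linearity is
  required up to equality on the disc.\<close>

definition linear_on_HD :: "op \<Rightarrow> bool" where
  "linear_on_HD L \<longleftrightarrow> (\<forall>f1 f2 f a b. f1 \<in> HD \<longrightarrow> f2 \<in> HD \<longrightarrow> f \<in> HD \<longrightarrow>
      (\<forall>z\<in>ball 0 1. f z = a * f1 z + b * f2 z) \<longrightarrow>
      (\<forall>z\<in>ball 0 1. L f z = a * L f1 z + b * L f2 z))"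

definition lu_continuous :: "op \<Rightarrow> bool" where
  "lu_continuous L \<longleftrightarrow> (\<forall>F f. (\<forall>n. F n \<in> HD) \<longrightarrow> f \<in> HD \<longrightarrow>
      locally_uniform_limit F f \<longrightarrow> locally_uniform_limit (\<lambda>n. L (F n)) (L f))"

definition continuous_linear_op :: "op \<Rightarrow> bool" where
  "continuous_linear_op L \<longleftrightarrow> (\<forall>f\<in>HD. L f \<in> HD) \<and> linear_on_HD L \<and> lu_continuous L"

lemma linear_on_HDD:
  assumes "linear_on_HD L" "f1 \<in> HD" "f2 \<in> HD" "f \<in> HD"
    and "\<And>z. z \<in> ball 0 1 \<Longrightarrow> f z = a * f1 z + b * f2 z" and "z \<in> ball 0 1"
  shows "L f z = a * L f1 z + b * L f2 z"
  using assms unfolding linear_on_HD_def by blast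

lemma linear_on_HD_sum:
  assumes L: "linear_on_HD L" and I: "finite I" and \<phi>: "\<And>i. i \<in> I \<Longrightarrow> \<phi> i \<in> HD"
    and f: "f \<in> HD" "\<And>z. z \<in> ball 0 1 \<Longrightarrow> f z = (\<Sum>i\<in>I. c i * \<phi> i z)"
    and z: "z \<in> ball 0 1"
  shows "L f z = (\<Sum>i\<in>I. c i * L (\<phi> i) z)"
  using I \<phi> f z
proof (induction I arbitrary: f z rule: finite_induct)
  case empty
  then show ?case
    using linear_on_HDD[OF L empty.prems(2,2,2), of 0 0] by simp
next
  case (insert j I)
  define f' where "f' = (\<lambda>w. \<Sum>i\<in>I. c i * \<phi> i w)"
  have f': "f' \<in> HD"
    using insert.prems(1) unfolding f'_def HD_def by (auto intro!: holomorphic_intros)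
  have "L f z = c j * L (\<phi> j) z + 1 * L f' z"
    using insert.prems insert.hyps f' by (intro linear_on_HDD[OF L]) (auto simp: f'_def)
  also have "L f' z = (\<Sum>i\<in>I. c i * L (\<phi> i) z)"
    using insert.prems f' by (intro insert.IH) (auto simp: f'_def)
  finally show ?case
    using insert.hyps by simp
qed

lemma continuous_linear_op_Mop:
  assumes k: "k holomorphic_on ball 0 1"
  shows "continuous_linear_op (Mop k)"
proof -
  have "linear_on_HD (Mop k)"
    by (simp add: linear_on_HD_def Mop_def algebra_simps)
  moreover have "lu_continuous (Mop k)"
    using k unfolding lu_continuous_def Mop_def HD_def
    by (auto intro!: locally_uniform_limit_mult holomorphic_on_imp_continuous_on)
  ultimately show ?thesis
    using k by (auto simp: continuous_linear_op_def HD_def Mop_def intro!: holomorphic_intros)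
qed

lemma continuous_linear_op_deriv: "continuous_linear_op deriv"
proof -
  have "linear_on_HD deriv"
    unfolding linear_on_HD_def
  proof (intro allI impI ballI)
    fix f1 f2 f :: "complex \<Rightarrow> complex" and a b z :: complex
    assume "f1 \<in> HD" "f2 \<in> HD" "f \<in> HD" and f: "\<forall>z\<in>ball 0 1. f z = a * f1 z + b * f2 z"
      and z: "z \<in> ball 0 1"
    then have hol: "f1 holomorphic_on ball 0 1" "f2 holomorphic_on ball 0 1" "f holomorphic_on ball 0 1"
      by (simp_all add: HD_def)
    have d: "f1 field_differentiable at z" "f2 field_differentiable at z"
      using hol z by (simp_all add: holomorphic_on_imp_differentiable_at)
    have "deriv f z = deriv (\<lambda>w. a * f1 w + b * f2 w) z"
      using f by (intro complex_derivative_transform_within_open[OF hol(3) _ open_ball z])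
                 (auto intro!: holomorphic_intros hol)
    also have "\<dots> = deriv (\<lambda>w. a * f1 w) z + deriv (\<lambda>w. b * f2 w) z"
      using d by (intro deriv_add field_differentiable_mult field_differentiable_const)
    also have "\<dots> = a * deriv f1 z + b * deriv f2 z"
      using d by (simp add: deriv_cmult)
    finally show "deriv f z = a * deriv f1 z + b * deriv f2 z" .
  qed
  moreover have "lu_continuous deriv"
    unfolding lu_continuous_def HD_def by (auto intro: locally_uniform_limit_deriv)
  ultimately show ?thesis
    by (simp add: continuous_linear_op_def HD_def holomorphic_deriv)
qed

lemma continuous_linear_op_line_integral_op: "continuous_linear_op line_integral_op"
proof -
  have "linear_on_HD line_integral_op"
    unfolding linear_on_HD_def
  proof (intro allI impI ballI)
    fix f1 f2 f :: "complex \<Rightarrow> complex" and a b z :: complex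
    assume "f1 \<in> HD" "f2 \<in> HD" "f \<in> HD" and f: "\<forall>z\<in>ball 0 1. f z = a * f1 z + b * f2 z"
      and z: "z \<in> ball 0 1"
    then have int: "f1 contour_integrable_on linepath 0 z" "f2 contour_integrable_on linepath 0 z"
      by (simp_all add: HD_def contour_integrable_linepath_0)
    have "line_integral_op f z = contour_integral (linepath 0 z) (\<lambda>w. a * f1 w + b * f2 w)"
      unfolding line_integral_op_def
      using f path_image_linepath_0_subset_disc[OF z] by (intro contour_integral_eq) auto
    also have "\<dots> = a * line_integral_op f1 z + b * line_integral_op f2 z"
      using int by (simp add: line_integral_op_def contour_integral_add contour_integral_lmul
                              contour_integrable_lmul)
    finally show "line_integral_op f z = a * line_integral_op f1 z + b * line_integral_op f2 z" .
  qed
  moreover have "lu_continuous line_integral_op"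
    unfolding lu_continuous_def HD_def by (auto intro: locally_uniform_limit_line_integral_op)
  ultimately show ?thesis
    by (simp add: continuous_linear_op_def HD_def holomorphic_on_line_integral_op)
qed

lemma continuous_linear_op_comp:
  assumes "continuous_linear_op L1" and "continuous_linear_op L2"
  shows "continuous_linear_op (L1 \<circ> L2)"
proof -
  have HD1: "\<And>f. f \<in> HD \<Longrightarrow> L1 f \<in> HD" and HD2: "\<And>f. f \<in> HD \<Longrightarrow> L2 f \<in> HD"
    and lin1: "linear_on_HD L1" and lin2: "linear_on_HD L2"
    and cont1: "lu_continuous L1" and cont2: "lu_continuous L2"
    using assms by (simp_all add: continuous_linear_op_def)
  have "linear_on_HD (L1 \<circ> L2)"
    unfolding linear_on_HD_def
  proof (intro allI impI ballI)
    fix f1 f2 f :: "complex \<Rightarrow> complex" and a b z :: complex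
    assume f: "f1 \<in> HD" "f2 \<in> HD" "f \<in> HD" "\<forall>z\<in>ball 0 1. f z = a * f1 z + b * f2 z"
      and z: "z \<in> ball 0 1"
    have "L2 f w = a * L2 f1 w + b * L2 f2 w" if "w \<in> ball 0 1" for w
      using linear_on_HDD[OF lin2 f(1-3) _ that] f(4) by blast
    then show "(L1 \<circ> L2) f z = a * (L1 \<circ> L2) f1 z + b * (L1 \<circ> L2) f2 z"
      unfolding o_def by (rule linear_on_HDD[OF lin1 HD2[OF f(1)] HD2[OF f(2)] HD2[OF f(3)] _ z])
  qed
  moreover have "lu_continuous (L1 \<circ> L2)"
    unfolding lu_continuous_def o_def
  proof (intro allI impI)
    fix F f assume "\<forall>n. F n \<in> HD" "f \<in> HD" "locally_uniform_limit F f"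
    then have "locally_uniform_limit (\<lambda>n. L2 (F n)) (L2 f)"
      using cont2 unfolding lu_continuous_def by blast
    then show "locally_uniform_limit (\<lambda>n. L1 (L2 (F n))) (L1 (L2 f))"
      using cont1 HD2 \<open>\<forall>n. F n \<in> HD\<close> \<open>f \<in> HD\<close> unfolding lu_continuous_def by simp
  qed
  ultimately show ?thesis
    using HD1 HD2 by (simp add: continuous_linear_op_def)
qed

lemma locally_uniform_limit_lincomb:
  assumes "locally_uniform_limit F f" and "locally_uniform_limit G h"
  shows "locally_uniform_limit (\<lambda>n z. a * F n z + b * G n z) (\<lambda>z. a * f z + b * h z)"
  unfolding locally_uniform_limit_def
proof (intro allI impI)
  fix r :: real assume "r < 1"
  then have F: "uniform_limit (cball 0 r) F f sequentially"
    and G: "uniform_limit (cball 0 r) G h sequentially"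
    using assms unfolding locally_uniform_limit_def by simp_all
  have "uniform_limit (cball 0 r) (\<lambda>n z. a * F n z) (\<lambda>z. a * f z) sequentially"
    using F by (rule bounded_linear.uniform_limit[OF bounded_linear_mult_right])
  moreover have "uniform_limit (cball 0 r) (\<lambda>n z. b * G n z) (\<lambda>z. b * h z) sequentially"
    using G by (rule bounded_linear.uniform_limit[OF bounded_linear_mult_right])
  ultimately show "uniform_limit (cball 0 r) (\<lambda>n z. a * F n z + b * G n z) (\<lambda>z. a * f z + b * h z)
               sequentially"
    by (rule uniform_limit_add)
qed

lemma continuous_linear_op_lincomb:
  assumes "continuous_linear_op L1" and "continuous_linear_op L2"
  shows "continuous_linear_op (\<lambda>f z. a * L1 f z + b * L2 f z)"
proof -
  have HD1: "\<And>f. f \<in> HD \<Longrightarrow> L1 f \<in> HD" and HD2: "\<And>f. f \<in> HD \<Longrightarrow> L2 f \<in> HD"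
    and lin1: "linear_on_HD L1" and lin2: "linear_on_HD L2"
    and cont1: "lu_continuous L1" and cont2: "lu_continuous L2"
    using assms by (simp_all add: continuous_linear_op_def)
  have "linear_on_HD (\<lambda>f z. a * L1 f z + b * L2 f z)"
    unfolding linear_on_HD_def
  proof (intro allI impI ballI)
    fix f1 f2 f :: "complex \<Rightarrow> complex" and c d z :: complex
    assume f: "f1 \<in> HD" "f2 \<in> HD" "f \<in> HD" "\<forall>z\<in>ball 0 1. f z = c * f1 z + d * f2 z"
      and z: "z \<in> ball 0 1"
    have "L1 f z = c * L1 f1 z + d * L1 f2 z" and "L2 f z = c * L2 f1 z + d * L2 f2 z"
      using linear_on_HDD[OF lin1 f(1-3) _ z] linear_on_HDD[OF lin2 f(1-3) _ z] f(4) by blast+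
    then show "a * L1 f z + b * L2 f z
             = c * (a * L1 f1 z + b * L2 f1 z) + d * (a * L1 f2 z + b * L2 f2 z)"
      by (simp add: algebra_simps)
  qed
  moreover have "lu_continuous (\<lambda>f z. a * L1 f z + b * L2 f z)"
    unfolding lu_continuous_def
  proof (intro allI impI)
    fix F f assume "\<forall>n. F n \<in> HD" "f \<in> HD" "locally_uniform_limit F f"
    then have "locally_uniform_limit (\<lambda>n. L1 (F n)) (L1 f)"
      and "locally_uniform_limit (\<lambda>n. L2 (F n)) (L2 f)"
      using cont1 cont2 unfolding lu_continuous_def by simp_all
    then show "locally_uniform_limit (\<lambda>n z. a * L1 (F n) z + b * L2 (F n) z)
                 (\<lambda>z. a * L1 f z + b * L2 f z)"
      by (rule locally_uniform_limit_lincomb)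
  qed
  moreover have "(\<lambda>z. a * L1 f z + b * L2 f z) \<in> HD" if "f \<in> HD" for f
    using HD1[OF that] HD2[OF that] by (simp add: HD_def holomorphic_on_add holomorphic_on_mult)
  ultimately show ?thesis
    by (simp add: continuous_linear_op_def)
qed

lemma continuous_linear_op_gops:
  assumes g: "g holomorphic_on ball 0 1" and L: "L \<in> gops g"
  shows "continuous_linear_op L"
  using L
proof (induction rule: gops.induct)
  case gM
  show ?case
    using g by (rule continuous_linear_op_Mop)
next
  case gS
  show ?case
    unfolding Sop_altdef
    by (intro continuous_linear_op_comp continuous_linear_op_line_integral_op
              continuous_linear_op_Mop[OF g] continuous_linear_op_deriv)
next
  case gT
  show ?case
    unfolding Top_altdef
    by (intro continuous_linear_op_comp continuous_linear_op_line_integral_op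
              continuous_linear_op_Mop holomorphic_deriv[OF g open_ball])
next
  case (gcomp L1 L2)
  show ?case
    using gcomp.IH by (rule continuous_linear_op_comp)
next
  case (gadd L1 L2)
  then show ?case
    using continuous_linear_op_lincomb[of L1 L2 1 1] by simp
next
  case (gscale L c)
  then show ?case
    using continuous_linear_op_lincomb[of L L c 0] by simp
qed

lemma continuous_linear_op_eq_delta0:
  assumes L: "continuous_linear_op L"
    and kill: "\<And>l z. l \<ge> 1 \<Longrightarrow> z \<in> ball 0 1 \<Longrightarrow> L (\<lambda>w. w ^ l) z = 0"
    and f: "f \<in> HD" and z: "z \<in> ball 0 1"
  shows "L f z = f 0 * L (\<lambda>w. 1) z"
proof -
  define a where "a i = (deriv ^^ i) f 0 / fact i" for i
  define p where "p N = (\<lambda>w. \<Sum>i<N. a i * w ^ i)" for N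
  have monomial: "(\<lambda>w. w ^ i) \<in> HD" for i :: nat
    unfolding HD_def by (auto intro!: holomorphic_intros)
  have p: "p N \<in> HD" for N
    unfolding p_def HD_def by (auto intro!: holomorphic_intros)
  have p_eq: "L (p (Suc N)) z = f 0 * L (\<lambda>w. 1) z" for N
  proof -
    have "L (p (Suc N)) z = (\<Sum>i<Suc N. a i * L (\<lambda>w. w ^ i) z)"
    proof (rule linear_on_HD_sum[OF _ finite_lessThan _ p _ z])
      show "linear_on_HD L"
        using L by (simp add: continuous_linear_op_def)
      show "p (Suc N) w = (\<Sum>i<Suc N. a i * w ^ i)" for w
        by (simp add: p_def)
    qed (rule monomial)
    also have "\<dots> = a 0 * L (\<lambda>w. w ^ 0) z + (\<Sum>i<N. a (Suc i) * L (\<lambda>w. w ^ Suc i) z)"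
      by (rule sum.lessThan_Suc_shift)
    also have "(\<Sum>i<N. a (Suc i) * L (\<lambda>w. w ^ Suc i) z) = 0"
      using kill[OF _ z] by (simp del: power_Suc)
    finally show ?thesis
      by (simp add: a_def)
  qed
  have "locally_uniform_limit p f"
    using locally_uniform_limit_Taylor_polynomials f unfolding HD_def p_def a_def by simp
  then have "locally_uniform_limit (\<lambda>N. L (p N)) (L f)"
    using L p f by (simp add: continuous_linear_op_def lu_continuous_def)
  then have "uniform_limit (cball 0 (norm z)) (\<lambda>N. L (p N)) (L f) sequentially"
    using z by (simp add: locally_uniform_limit_def)
  then have "(\<lambda>N. L (p N) z) \<longlonglongrightarrow> L f z"
    by (rule tendsto_uniform_limitI) simp
  then have "(\<lambda>N. L (p (Suc N)) z) \<longlonglongrightarrow> L f z"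
    by (rule LIMSEQ_Suc)
  then show ?thesis
    unfolding p_eq by (simp add: LIMSEQ_const_iff)
qed

lemma HD_power: "g holomorphic_on ball 0 1 \<Longrightarrow> (\<lambda>w. g w ^ n) \<in> HD"
  unfolding HD_def mem_Collect_eq by (rule holomorphic_on_power)

lemma linear_on_HD_poly_of:
  assumes L: "linear_on_HD L" and g: "g holomorphic_on ball 0 1"
    and f: "f \<in> HD" "\<And>w. w \<in> ball 0 1 \<Longrightarrow> f w = poly p (g w)" and z: "z \<in> ball 0 1"
  shows "L f z = (\<Sum>i\<le>degree p. coeff p i * L (\<lambda>w. g w ^ i) z)"
  by (rule linear_on_HD_sum[OF L finite_atMost HD_power[OF g] f(1) _ z]) (simp add: f(2) poly_altdef)

lemma has_field_derivative_power_div_Suc: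
  assumes g: "g holomorphic_on ball 0 1" and x: "x \<in> ball 0 1"
  shows "((\<lambda>w. g w ^ Suc n / of_nat (Suc n)) has_field_derivative g x ^ n * deriv g x) (at x)"
proof (rule DERIV_cong[OF DERIV_cdivide[OF DERIV_power_Suc[OF holomorphic_derivI[OF g open_ball x]]]])
  have "(of_nat (Suc n) :: complex) \<noteq> 0"
    by (simp only: of_nat_eq_0_iff nat.distinct(2) not_False_eq_True)
  then show "(1 + of_nat n) * (deriv g x * g x ^ n) / of_nat (Suc n) = g x ^ n * deriv g x"
    by (simp add: field_simps)
qed

lemma Top_power:
  assumes g: "g holomorphic_on ball 0 1" and z: "z \<in> ball 0 1"
  shows "Top g (\<lambda>w. g w ^ n) z = (g z ^ Suc n - g 0 ^ Suc n) / of_nat (Suc n)"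
  unfolding Top_def
  using contour_integral_linepath_0_primitive[OF has_field_derivative_power_div_Suc[OF g] z]
  by (simp add: diff_divide_distrib)

lemma Sop_power:
  assumes g: "g holomorphic_on ball 0 1" and z: "z \<in> ball 0 1"
  shows "Sop g (\<lambda>w. g w ^ n) z = of_nat n * ((g z ^ Suc n - g 0 ^ Suc n) / of_nat (Suc n))"
proof -
  have "Sop g (\<lambda>w. g w ^ n) z
        = contour_integral (linepath 0 z) (\<lambda>w. of_nat n * (g w ^ n * deriv g w))"
    unfolding Sop_def
  proof (rule contour_integral_eq)
    fix x assume "x \<in> path_image (linepath 0 z)"
    then have x: "x \<in> ball 0 1"
      using path_image_linepath_0_subset_disc[OF z] by blast
    have "deriv (\<lambda>w. g w ^ n) x = of_nat n * (deriv g x * g x ^ (n - Suc 0))"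
      by (rule DERIV_imp_deriv[OF DERIV_power[OF holomorphic_derivI[OF g open_ball x]]])
    then show "deriv (\<lambda>w. g w ^ n) x * g x = of_nat n * (g x ^ n * deriv g x)"
      by (cases n) (simp_all add: algebra_simps)
  qed
  also have "\<dots> = of_nat n * (g z ^ Suc n / of_nat (Suc n))
                   - of_nat n * (g 0 ^ Suc n / of_nat (Suc n))"
    by (rule contour_integral_linepath_0_primitive
               [OF DERIV_cmult[OF has_field_derivative_power_div_Suc[OF g]] z])
  finally show ?thesis
    by (simp add: diff_divide_distrib algebra_simps)
qed

lemma poly_eq_sum_coeff:
  fixes p :: "'a::{comm_semiring_0, semiring_1} poly"
  assumes "degree p \<le> D"
  shows "poly p x = (\<Sum>i\<le>D. coeff p i * x ^ i)"
  unfolding poly_altdef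
  by (rule sum.mono_neutral_left) (use assms in \<open>auto simp: coeff_eq_0\<close>)

lemma gops_power_eq_poly:
  assumes g: "g holomorphic_on ball 0 1" and L: "L \<in> gops g"
  shows "\<exists>G. \<forall>z\<in>ball 0 1. L (\<lambda>w. g w ^ n) z = poly G (g z)"
  using L
proof (induction arbitrary: n rule: gops.induct)
  case gM
  show ?case
    by (rule exI[of _ "monom 1 (Suc n)"]) (simp add: Mop_def poly_monom)
next
  case gT
  show ?case
    by (rule exI[of _ "smult (1 / of_nat (Suc n)) (monom 1 (Suc n) - [:g 0 ^ Suc n:])"])
       (simp add: Top_power[OF g] poly_monom)
next
  case gS
  show ?case
    by (rule exI[of _ "smult (of_nat n / of_nat (Suc n)) (monom 1 (Suc n) - [:g 0 ^ Suc n:])"])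
       (simp add: Sop_power[OF g] poly_monom)
next
  case (gcomp L1 L2)
  obtain G1 where G1: "\<And>i z. z \<in> ball 0 1 \<Longrightarrow> L1 (\<lambda>w. g w ^ i) z = poly (G1 i) (g z)"
    using gcomp.IH(1) by metis
  obtain G2 where G2: "\<And>z. z \<in> ball 0 1 \<Longrightarrow> L2 (\<lambda>w. g w ^ n) z = poly G2 (g z)"
    using gcomp.IH(2) by metis
  have L1: "continuous_linear_op L1" and L2: "continuous_linear_op L2"
    using continuous_linear_op_gops[OF g] gcomp.hyps by auto
  have "(L1 \<circ> L2) (\<lambda>w. g w ^ n) z = poly (\<Sum>i\<le>degree G2. smult (coeff G2 i) (G1 i)) (g z)"
    if z: "z \<in> ball 0 1" for z
  proof -
    have "(L1 \<circ> L2) (\<lambda>w. g w ^ n) z = (\<Sum>i\<le>degree G2. coeff G2 i * L1 (\<lambda>w. g w ^ i) z)"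
      unfolding o_def
    proof (rule linear_on_HD_poly_of[OF _ g _ G2 z])
      show "linear_on_HD L1" and "L2 (\<lambda>w. g w ^ n) \<in> HD"
        using L1 L2 HD_power[OF g] by (simp_all add: continuous_linear_op_def)
    qed
    also have "\<dots> = poly (\<Sum>i\<le>degree G2. smult (coeff G2 i) (G1 i)) (g z)"
      by (simp add: poly_sum G1[OF z])
    finally show ?thesis .
  qed
  then show ?case by blast
next
  case (gadd L1 L2)
  obtain G1 G2 where "\<And>z. z \<in> ball 0 1 \<Longrightarrow> L1 (\<lambda>w. g w ^ n) z = poly G1 (g z)"
    and "\<And>z. z \<in> ball 0 1 \<Longrightarrow> L2 (\<lambda>w. g w ^ n) z = poly G2 (g z)"
    using gadd.IH by metis
  then show ?case
    by (intro exI[of _ "G1 + G2"]) simp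
next
  case (gscale L c)
  obtain G where "\<And>z. z \<in> ball 0 1 \<Longrightarrow> L (\<lambda>w. g w ^ n) z = poly G (g z)"
    using gscale.IH by metis
  then show ?case
    by (intro exI[of _ "smult c G"]) simp
qed

definition rational_seq :: "(nat \<Rightarrow> complex) \<Rightarrow> bool" where
  "rational_seq c \<longleftrightarrow> (\<exists>p q. (\<forall>m. poly q (of_nat m) \<noteq> 0) \<and>
                               (\<forall>m. c m = poly p (of_nat m) / poly q (of_nat m)))"

lemma rational_seqE:
  assumes "rational_seq c"
  obtains p q where "\<And>m. c m = poly p (of_nat m) / poly q (of_nat m)" "\<And>m. poly q (of_nat m) \<noteq> 0"
  using assms unfolding rational_seq_def by auto

lemma rational_seq_const: "rational_seq (\<lambda>n. a)"
  unfolding rational_seq_def by (rule exI[of _ "[:a:]"], rule exI[of _ 1]) simp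

lemma rational_seq_of_nat: "rational_seq of_nat"
  unfolding rational_seq_def by (rule exI[of _ "[:0, 1:]"], rule exI[of _ 1]) simp

lemma rational_seq_inverse_Suc: "rational_seq (\<lambda>n. 1 / of_nat (Suc n))"
proof -
  have "poly [:1, 1:] (of_nat m) = (of_nat (Suc m) :: complex)" for m
    by simp
  then show ?thesis
    unfolding rational_seq_def
    by (intro exI[of _ 1] exI[of _ "[:1, 1:]"])
       (simp only: poly_1 of_nat_eq_0_iff nat.distinct(2) not_False_eq_True simp_thms)
qed

lemma rational_seq_add:
  assumes "rational_seq c1" and "rational_seq c2"
  shows "rational_seq (\<lambda>n. c1 n + c2 n)"
proof -
  obtain p1 q1 p2 q2
    where q: "\<And>m. poly q1 (of_nat m) \<noteq> 0" "\<And>m. poly q2 (of_nat m) \<noteq> 0"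
      and c: "\<And>m. c1 m = poly p1 (of_nat m) / poly q1 (of_nat m)"
             "\<And>m. c2 m = poly p2 (of_nat m) / poly q2 (of_nat m)"
    using assms by (metis rational_seqE)
  show ?thesis
    unfolding rational_seq_def
    by (intro exI[of _ "p1 * q2 + p2 * q1"] exI[of _ "q1 * q2"]) (simp add: q c field_simps)
qed

lemma rational_seq_mult:
  assumes "rational_seq c1" and "rational_seq c2"
  shows "rational_seq (\<lambda>n. c1 n * c2 n)"
proof -
  obtain p1 q1 p2 q2
    where q: "\<And>m. poly q1 (of_nat m) \<noteq> 0" "\<And>m. poly q2 (of_nat m) \<noteq> 0"
      and c: "\<And>m. c1 m = poly p1 (of_nat m) / poly q1 (of_nat m)"
             "\<And>m. c2 m = poly p2 (of_nat m) / poly q2 (of_nat m)"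
    using assms by (metis rational_seqE)
  show ?thesis
    unfolding rational_seq_def
    by (intro exI[of _ "p1 * p2"] exI[of _ "q1 * q2"]) (simp add: q c)
qed

lemma rational_seq_sum:
  "finite I \<Longrightarrow> (\<And>i. i \<in> I \<Longrightarrow> rational_seq (c i)) \<Longrightarrow> rational_seq (\<lambda>n. \<Sum>i\<in>I. c i n)"
  by (induction I rule: finite_induct) (simp_all add: rational_seq_const rational_seq_add)

lemma rational_seq_shift:
  assumes "rational_seq c"
  shows "rational_seq (\<lambda>n. c (n + k))"
proof -
  obtain p q where c: "\<And>m. c m = poly p (of_nat m) / poly q (of_nat m)"
    and q: "\<And>m. poly q (of_nat m) \<noteq> 0"
    using assms by (metis rational_seqE)
  have shift: "poly (r \<circ>\<^sub>p [:of_nat k, 1:]) (of_nat m) = poly r (of_nat (m + k))" for r :: "complex poly" and m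
    by (simp add: poly_pcompose add.commute)
  show ?thesis
    unfolding rational_seq_def
    by (intro exI[of _ "p \<circ>\<^sub>p [:of_nat k, 1:]"] exI[of _ "q \<circ>\<^sub>p [:of_nat k, 1:]"])
       (simp only: shift q c simp_thms all_simps)
qed

lemma rational_seq_vanishing_at_0:
  assumes "rational_seq c" and "\<And>m. m \<ge> 1 \<Longrightarrow> c m = 0"
  shows "c 0 = 0"
proof -
  obtain p q where c: "\<And>m. c m = poly p (of_nat m) / poly q (of_nat m)"
    and q: "\<And>m. poly q (of_nat m) \<noteq> 0"
    using assms(1) by (metis rational_seqE)
  have "of_nat ` {1..} \<subseteq> {x. poly p x = (0::complex)}"
    using assms(2) q c by force
  moreover have "infinite (of_nat ` {1..} :: complex set)"
    using infinite_Ici[of "1::nat"] by (simp add: finite_image_iff inj_on_def)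
  ultimately have "p = 0"
    using poly_roots_finite finite_subset by blast
  then show ?thesis
    by (simp add: c)
qed

definition rational_power_action :: "(complex \<Rightarrow> complex) \<Rightarrow> op \<Rightarrow> bool" where
  "rational_power_action g L \<longleftrightarrow>
     (\<exists>Q D. (\<forall>n. degree (Q n) \<le> D) \<and> (\<forall>e. rational_seq (\<lambda>n. coeff (Q n) e)) \<and>
        (\<forall>n. \<forall>z\<in>ball 0 1. L (\<lambda>w. g w ^ n) z = poly (Q n) (g z) * g z ^ n))"

lemma rational_power_actionE:
  assumes "rational_power_action g L"
  obtains Q D where "\<And>n. degree (Q n) \<le> D" "\<And>e. rational_seq (\<lambda>n. coeff (Q n) e)"
    "\<And>n z. z \<in> ball 0 1 \<Longrightarrow> L (\<lambda>w. g w ^ n) z = poly (Q n) (g z) * g z ^ n"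
  using assms unfolding rational_power_action_def by blast

lemma rational_power_action_linear:
  assumes c: "rational_seq c"
    and L: "\<And>n z. z \<in> ball 0 1 \<Longrightarrow> L (\<lambda>w. g w ^ n) z = c n * g z ^ Suc n"
  shows "rational_power_action g L"
proof -
  have "(\<lambda>n. coeff [:0, c n:] e) = (if e = 1 then c else (\<lambda>n. 0))" for e
    by (cases e) (auto simp: fun_eq_iff coeff_pCons split: nat.split)
  then have "rational_seq (\<lambda>n. coeff [:0, c n:] e)" for e
    using c by (simp add: rational_seq_const)
  moreover have "degree [:0, c n:] \<le> 1" for n
    by simp
  ultimately show ?thesis
    unfolding rational_power_action_def using L
    by (intro exI[of _ "\<lambda>n. [:0, c n:]"] exI[of _ 1]) (simp add: mult_ac)
qed

lemma rational_power_action_lincomb: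
  assumes "rational_power_action g L1" and "rational_power_action g L2"
  shows "rational_power_action g (\<lambda>f z. a * L1 f z + b * L2 f z)"
proof -
  obtain Q1 D1 where deg1: "\<And>n. degree (Q1 n) \<le> D1"
    and rat1: "\<And>e. rational_seq (\<lambda>n. coeff (Q1 n) e)"
    and L1: "\<And>n z. z \<in> ball 0 1 \<Longrightarrow> L1 (\<lambda>w. g w ^ n) z = poly (Q1 n) (g z) * g z ^ n"
    using rational_power_actionE[OF assms(1)] by blast
  obtain Q2 D2 where deg2: "\<And>n. degree (Q2 n) \<le> D2"
    and rat2: "\<And>e. rational_seq (\<lambda>n. coeff (Q2 n) e)"
    and L2: "\<And>n z. z \<in> ball 0 1 \<Longrightarrow> L2 (\<lambda>w. g w ^ n) z = poly (Q2 n) (g z) * g z ^ n"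
    using rational_power_actionE[OF assms(2)] by blast
  have "degree (smult a (Q1 n) + smult b (Q2 n)) \<le> max D1 D2" for n
    using deg1[of n] deg2[of n] degree_smult_le[of a "Q1 n"] degree_smult_le[of b "Q2 n"]
    by (intro degree_add_le) auto
  moreover have "rational_seq (\<lambda>n. coeff (smult a (Q1 n) + smult b (Q2 n)) e)" for e
    by (simp add: rational_seq_add rational_seq_mult rational_seq_const rat1 rat2)
  ultimately show ?thesis
    unfolding rational_power_action_def using L1 L2
    by (intro exI[of _ "\<lambda>n. smult a (Q1 n) + smult b (Q2 n)"] exI[of _ "max D1 D2"])
       (simp add: algebra_simps)
qed

lemma degree_sum_smult_monom_mult_le:
  assumes "\<And>e. degree (P e) \<le> D1"
  shows "degree (\<Sum>e\<le>D2. smult (c e) (monom 1 e * P e)) \<le> D2 + D1"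
proof (rule degree_sum_le)
  fix e assume "e \<in> {..D2}"
  have "degree (smult (c e) (monom 1 e * P e)) \<le> degree (monom 1 e :: 'a poly) + degree (P e)"
    by (rule order_trans[OF degree_smult_le degree_mult_le])
  also have "\<dots> \<le> D2 + D1"
    using \<open>e \<in> {..D2}\<close> degree_monom_le[of "1::'a" e] assms[of e] by simp
  finally show "degree (smult (c e) (monom 1 e * P e)) \<le> D2 + D1" .
qed simp

lemma rational_seq_coeff_sum_smult_monom_mult:
  assumes "\<And>e. rational_seq (\<lambda>n. coeff (Q1 n) e)" and "\<And>e. rational_seq (\<lambda>n. coeff (Q2 n) e)"
  shows "rational_seq (\<lambda>n. coeff (\<Sum>e\<le>D. smult (coeff (Q2 n) e) (monom 1 e * Q1 (n + e))) d)"
proof -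
  have "rational_seq (\<lambda>n. if d < e then 0 else coeff (Q1 (n + e)) (d - e))" for e
    using rational_seq_shift[OF assms(1)[of "d - e"], of e]
    by (cases "d < e") (simp_all add: rational_seq_const)
  then show ?thesis
    by (simp add: coeff_sum coeff_monom_mult rational_seq_sum rational_seq_mult assms(2)
             cong: if_cong)
qed

lemma rational_power_action_comp:
  assumes g: "g holomorphic_on ball 0 1"
    and "continuous_linear_op L1" and "continuous_linear_op L2"
    and "rational_power_action g L1" and "rational_power_action g L2"
  shows "rational_power_action g (L1 \<circ> L2)"
proof -
  obtain Q1 D1 where deg1: "\<And>n. degree (Q1 n) \<le> D1"
    and rat1: "\<And>e. rational_seq (\<lambda>n. coeff (Q1 n) e)"
    and L1: "\<And>n z. z \<in> ball 0 1 \<Longrightarrow> L1 (\<lambda>w. g w ^ n) z = poly (Q1 n) (g z) * g z ^ n"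
    using rational_power_actionE[OF assms(4)] by blast
  obtain Q2 D2 where deg2: "\<And>n. degree (Q2 n) \<le> D2"
    and rat2: "\<And>e. rational_seq (\<lambda>n. coeff (Q2 n) e)"
    and L2: "\<And>n z. z \<in> ball 0 1 \<Longrightarrow> L2 (\<lambda>w. g w ^ n) z = poly (Q2 n) (g z) * g z ^ n"
    using rational_power_actionE[OF assms(5)] by blast
  define Q where "Q n = (\<Sum>e\<le>D2. smult (coeff (Q2 n) e) (monom 1 e * Q1 (n + e)))" for n
  have "degree (Q n) \<le> D2 + D1" for n
    unfolding Q_def by (rule degree_sum_smult_monom_mult_le) (rule deg1)
  moreover have "rational_seq (\<lambda>n. coeff (Q n) e)" for e
    unfolding Q_def using rat1 rat2 by (rule rational_seq_coeff_sum_smult_monom_mult)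
  moreover have "(L1 \<circ> L2) (\<lambda>w. g w ^ n) z = poly (Q n) (g z) * g z ^ n"
    if z: "z \<in> ball 0 1" for n z
  proof -
    have "(L1 \<circ> L2) (\<lambda>w. g w ^ n) z = (\<Sum>e\<le>D2. coeff (Q2 n) e * L1 (\<lambda>w. g w ^ (n + e)) z)"
      unfolding o_def
    proof (rule linear_on_HD_sum[OF _ finite_atMost HD_power[OF g] _ _ z])
      show "linear_on_HD L1" and "L2 (\<lambda>w. g w ^ n) \<in> HD"
        using assms(2,3) HD_power[OF g] by (simp_all add: continuous_linear_op_def)
      show "L2 (\<lambda>w. g w ^ n) w = (\<Sum>e\<le>D2. coeff (Q2 n) e * g w ^ (n + e))"
        if "w \<in> ball 0 1" for w
        by (simp add: L2[OF that] poly_eq_sum_coeff[OF deg2] sum_distrib_left power_add mult_ac)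
    qed
    also have "\<dots> = (\<Sum>e\<le>D2. coeff (Q2 n) e * (poly (Q1 (n + e)) (g z) * g z ^ (n + e)))"
      by (simp add: L1[OF z])
    also have "\<dots> = poly (Q n) (g z) * g z ^ n"
      unfolding Q_def
      by (simp add: poly_sum poly_monom sum_distrib_left sum_distrib_right power_add mult_ac)
    finally show ?thesis .
  qed
  ultimately show ?thesis
    unfolding rational_power_action_def by blast
qed

lemma gops_rational_power_action:
  assumes g: "g holomorphic_on ball 0 1" and g0: "g 0 = 0" and L: "L \<in> gops g"
  shows "rational_power_action g L"
  using L
proof (induction rule: gops.induct)
  case gM
  show ?case
    by (rule rational_power_action_linear[OF rational_seq_const[of 1]]) (simp add: Mop_def)
next
  case gT
  show ?case
    by (rule rational_power_action_linear[OF rational_seq_inverse_Suc])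
       (simp add: Top_power[OF g] g0)
next
  case gS
  show ?case
    by (rule rational_power_action_linear[OF rational_seq_mult[OF rational_seq_of_nat
                                                                 rational_seq_inverse_Suc]])
       (simp add: Sop_power[OF g] g0)
next
  case (gcomp L1 L2)
  then show ?case
    using continuous_linear_op_gops[OF g] by (intro rational_power_action_comp[OF g]) auto
next
  case (gadd L1 L2)
  then show ?case
    using rational_power_action_lincomb[of g L1 L2 1 1] by simp
next
  case (gscale L c)
  then show ?case
    using rational_power_action_lincomb[of g L L c 0] by simp
qed

lemma gops_eq_0_if_g_eq_0:
  assumes g: "g holomorphic_on ball 0 1" and g_0: "\<And>z. z \<in> ball 0 1 \<Longrightarrow> g z = 0"
    and L: "L \<in> gops g"
  shows "\<forall>f\<in>HD. \<forall>z\<in>ball 0 1. L f z = 0"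
  using L
proof (induction rule: gops.induct)
  case gM
  then show ?case
    by (simp add: Mop_def g_0)
next
  case gS
  have "Sop g f z = 0" if "z \<in> ball 0 1" for f z
    unfolding Sop_def
    using g_0 path_image_linepath_0_subset_disc[OF that] by (intro contour_integral_eq_0) auto
  then show ?case
    by blast
next
  case gT
  have "deriv g w = 0" if "w \<in> ball 0 1" for w
    using complex_derivative_transform_within_open[OF g holomorphic_on_const open_ball that] g_0
    by simp
  then have "Top g f z = 0" if "z \<in> ball 0 1" for f z
    unfolding Top_def
    using path_image_linepath_0_subset_disc[OF that] by (intro contour_integral_eq_0) auto
  then show ?case
    by blast
next
  case (gcomp L1 L2)
  then show ?case
    using continuous_linear_op_gops[OF g gcomp.hyps(2)] by (auto simp: continuous_linear_op_def)
qed simp_all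

lemma infinite_image_nonconstant:
  assumes "g holomorphic_on ball 0 1" and "\<not> g constant_on ball 0 1"
  shows "infinite (g ` ball 0 1)"
proof
  assume "finite (g ` ball 0 1)"
  moreover have "open (g ` ball 0 1)"
    using assms by (intro open_mapping_thm[OF _ open_ball connected_ball open_ball order_refl])
  ultimately show False
    using finite_imp_not_open[of "g ` ball 0 1"] by simp
qed

lemma poly_eq_0_if_vanishes_on_image:
  assumes g: "g holomorphic_on ball 0 1" and "\<not> g constant_on ball 0 1"
    and p: "\<And>z. z \<in> ball 0 1 \<Longrightarrow> g z \<noteq> 0 \<Longrightarrow> poly p (g z) = 0"
  shows "p = 0"
proof (rule ccontr)
  assume "p \<noteq> 0"
  have "g ` ball 0 1 - {0} \<subseteq> {x. poly p x = 0}"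
    using p by auto
  moreover have "infinite (g ` ball 0 1 - {0})"
    using infinite_image_nonconstant[OF assms(1,2)] by simp
  ultimately show False
    using poly_roots_finite[OF \<open>p \<noteq> 0\<close>] finite_subset by blast
qed

lemma gops_delta0_eq_0:
  assumes g: "g holomorphic_on ball 0 1" and g0: "g 0 = 0" and L: "L \<in> gops g"
    and eq: "op_eq L (\<lambda>f z. poly P (g z) * f 0)"
  shows "op_eq L (\<lambda>f z. 0)"
proof (cases "g constant_on ball 0 1")
  case True
  then have "g z = 0" if "z \<in> ball 0 1" for z
    using g0 that by (metis centre_in_ball constant_on_def zero_less_one)
  then show ?thesis
    using gops_eq_0_if_g_eq_0[OF g _ L] by (simp add: op_eq_def)
next
  case False
  obtain Q where rat: "\<And>e. rational_seq (\<lambda>n. coeff (Q n) e)"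
    and L_power: "\<And>n z. z \<in> ball 0 1 \<Longrightarrow> L (\<lambda>w. g w ^ n) z = poly (Q n) (g z) * g z ^ n"
    using gops_rational_power_action[OF g g0 L] unfolding rational_power_action_def by blast
  have L_eq: "L f z = poly P (g z) * f 0" if "f \<in> HD" "z \<in> ball 0 1" for f z
    using eq that by (simp add: op_eq_def)
  have Q_pos: "Q n = 0" if "n \<ge> 1" for n
  proof (rule poly_eq_0_if_vanishes_on_image[OF g False])
    fix z assume z: "z \<in> ball 0 1" "g z \<noteq> 0"
    have "poly (Q n) (g z) * g z ^ n = poly P (g z) * g 0 ^ n"
      using L_power[OF z(1), of n] L_eq[OF HD_power[OF g] z(1), of n] by simp
    then show "poly (Q n) (g z) = 0"
      using z g0 that by (simp add: power_0_left)
  qed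
  have "Q 0 = 0"
    by (intro poly_eqI) (simp add: rational_seq_vanishing_at_0[OF rat] Q_pos)
  then show ?thesis
    using L_eq[OF HD_power[OF g], of _ 0] L_power[of _ 0] L_eq by (simp add: op_eq_def)
qed

lemma trivial_gop_kills_monomials:
  assumes "trivial_gop g L" and "l \<ge> 1" and "z \<in> ball 0 1"
  shows "L (\<lambda>w. w ^ l) z = 0"
proof -
  obtain P where "op_eq L (\<lambda>f z. g 0 * poly P (g z - g 0) * f 0)"
    using assms(1) by (auto simp: trivial_gop_def)
  moreover have "(\<lambda>w::complex. w ^ l) \<in> HD"
    unfolding HD_def by (auto intro!: holomorphic_intros)
  ultimately show ?thesis
    using assms(2,3) by (simp add: op_eq_def)
qed

lemma trivial_gop_if_kills_monomials:
  assumes g: "g holomorphic_on ball 0 1" and L: "L \<in> gops g"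
    and kill: "\<And>l z. l \<ge> 1 \<Longrightarrow> z \<in> ball 0 1 \<Longrightarrow> L (\<lambda>w. w ^ l) z = 0"
  shows "trivial_gop g L"
proof -
  obtain G where G: "\<And>z. z \<in> ball 0 1 \<Longrightarrow> L (\<lambda>w. g w ^ 0) z = poly G (g z)"
    using gops_power_eq_poly[OF g L] by blast
  have L_eq: "op_eq L (\<lambda>f z. poly G (g z) * f 0)"
    using continuous_linear_op_eq_delta0[OF continuous_linear_op_gops[OF g L] kill] G
    by (simp add: op_eq_def)
  show ?thesis
  proof (cases "g 0 = 0")
    case True
    then have "op_eq L (\<lambda>f z. g 0 * poly 0 (g z - g 0) * f 0)"
      using gops_delta0_eq_0[OF g True L L_eq] by (simp add: op_eq_def)
    then show ?thesis
      unfolding trivial_gop_def by blast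
  next
    case False
    then have "op_eq L (\<lambda>f z. g 0 * poly (smult (1 / g 0) (G \<circ>\<^sub>p [:g 0, 1:])) (g z - g 0) * f 0)"
      using L_eq by (simp add: op_eq_def poly_pcompose)
    then show ?thesis
      unfolding trivial_gop_def by blast
  qed
qed

theorem proposition3p10:
  fixes g :: "complex \<Rightarrow> complex"
  assumes "g holomorphic_on ball 0 1"
  shows "(g 0 = 0 \<longrightarrow>
            (\<forall>(P :: complex poly) L. L \<in> gops g \<and> op_eq L (\<lambda>f z. poly P (g z) * f 0)
               \<longrightarrow> op_eq L (\<lambda>f z. 0)))
       \<and> (\<forall>L \<in> gops g. trivial_gop g L \<longleftrightarrow>
            (\<forall>l::nat. l \<ge> 1 \<longrightarrow> (\<forall>z\<in>ball 0 1. L (\<lambda>w. w ^ l) z = 0)))"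
  using gops_delta0_eq_0[OF assms] trivial_gop_kills_monomials
    trivial_gop_if_kills_monomials[OF assms]
  by blast

end
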